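(* Let $\theta$ be a congruence of a fuzzy automaton $\mathcal F=(A,X,f)$. Then for each $i\in\{1,2,3\}$, $D_i(\mathcal F)\subseteq D_i(\mathcal F/\theta)$, and if $\mathcal F$ is D$i$-directable, then so is $\mathcal F/\theta$.
   Context: A fuzzy automaton is a triple $\mathcal F=(A,X,f)$ with $A$ a finite nonempty set of states, $X$ a finite nonempty alphabet, and $f:A\times X\times A\to[0,1]$, extended to words by $f^*(a,\varepsilon,a)=1$, $f^*(a,\varepsilon,b)=0$ ($b\neq a$), $f^*(a,vx,b)=\max_{c\in A}\min\{f^*(a,v,c),f(c,x,b)\}$. Let $\mathcal F(a,w)=\{b\in A\mid f^*(a,w,b)>0\}$. A word $w\in X^*$ is D1-directing for $\mathcal F$ if there is $c\in A$ with $\mathcal F(a,w)=\{c\}$ for all $a\in A$; D2-directing if $\mathcal F(a,w)=\mathcal F(b,w)$ for all $a,b\in A$; D3-directing if there is $c\in A$ with $c\in\mathcal F(a,w)$ for all $a\in A$. $D_i(\mathcal F)$ is the set of D$i$-directing words, and $\mathcal F$ is D$i$-directable if $D_i(\mathcal F)\neq\emptyset$. A congruence of $\mathcal F$ is an equivalence relation $\theta$ on $A$ such that whenever $a\,\theta\,a'$, then for all $x\in X$ and $b\in A$, $\max\{f(a,x,b')\mid b'\in[b]\}=\max\{f(a',x,b')\mid b'\in[b]\}$, where $[b]$ is the $\theta$-class of $b$. The quotient automaton is $\mathcal F/\theta=(A/\theta,X,f_\theta)$ with $f_\theta([a],x,[b])=\max\{f(a',x,b')\mid a'\in[a],\ b'\in[b]\}$.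 *)

theory Defs
  imports Complex_Main
begin

definition fuzzy_automaton :: "'a set \<Rightarrow> 'x set \<Rightarrow> ('a \<Rightarrow> 'x \<Rightarrow> 'a \<Rightarrow> real) \<Rightarrow> bool" where
  "fuzzy_automaton A X f \<longleftrightarrow> finite A \<and> A \<noteq> {} \<and> finite X \<and> X \<noteq> {} \<and>
     (\<forall>a\<in>A. \<forall>x\<in>X. \<forall>b\<in>A. 0 \<le> f a x b \<and> f a x b \<le> 1)"

text \<open>Extension to words, processed from the right end: the argument list is the
reversed word.\<close>
fun fstar_rev :: "'a set \<Rightarrow> ('a \<Rightarrow> 'x \<Rightarrow> 'a \<Rightarrow> real) \<Rightarrow> 'a \<Rightarrow> 'x list \<Rightarrow> 'a \<Rightarrow> real" where
  "fstar_rev A f a [] b = (if a = b then 1 else 0)"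
| "fstar_rev A f a (x # rw) b = Max ((\<lambda>c. min (fstar_rev A f a rw c) (f c x b)) ` A)"

definition fstar :: "'a set \<Rightarrow> ('a \<Rightarrow> 'x \<Rightarrow> 'a \<Rightarrow> real) \<Rightarrow> 'a \<Rightarrow> 'x list \<Rightarrow> 'a \<Rightarrow> real" where
  "fstar A f a w b = fstar_rev A f a (rev w) b"

definition reach :: "'a set \<Rightarrow> ('a \<Rightarrow> 'x \<Rightarrow> 'a \<Rightarrow> real) \<Rightarrow> 'a \<Rightarrow> 'x list \<Rightarrow> 'a set" where
  "reach A f a w = {b \<in> A. fstar A f a w b > 0}"

definition D1 :: "'a set \<Rightarrow> 'x set \<Rightarrow> ('a \<Rightarrow> 'x \<Rightarrow> 'a \<Rightarrow> real) \<Rightarrow> 'x list set" where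
  "D1 A X f = {w \<in> lists X. \<exists>c\<in>A. \<forall>a\<in>A. reach A f a w = {c}}"

definition D2 :: "'a set \<Rightarrow> 'x set \<Rightarrow> ('a \<Rightarrow> 'x \<Rightarrow> 'a \<Rightarrow> real) \<Rightarrow> 'x list set" where
  "D2 A X f = {w \<in> lists X. \<forall>a\<in>A. \<forall>b\<in>A. reach A f a w = reach A f b w}"

definition D3 :: "'a set \<Rightarrow> 'x set \<Rightarrow> ('a \<Rightarrow> 'x \<Rightarrow> 'a \<Rightarrow> real) \<Rightarrow> 'x list set" where
  "D3 A X f = {w \<in> lists X. \<exists>c\<in>A. \<forall>a\<in>A. c \<in> reach A f a w}"

definition Dset :: "nat \<Rightarrow> 'a set \<Rightarrow> 'x set \<Rightarrow> ('a \<Rightarrow> 'x \<Rightarrow> 'a \<Rightarrow> real) \<Rightarrow> 'x list set" where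
  "Dset i A X f = (if i = 1 then D1 A X f else if i = 2 then D2 A X f else D3 A X f)"

definition directable :: "nat \<Rightarrow> 'a set \<Rightarrow> 'x set \<Rightarrow> ('a \<Rightarrow> 'x \<Rightarrow> 'a \<Rightarrow> real) \<Rightarrow> bool" where
  "directable i A X f \<longleftrightarrow> Dset i A X f \<noteq> {}"

definition congruence :: "'a set \<Rightarrow> 'x set \<Rightarrow> ('a \<Rightarrow> 'x \<Rightarrow> 'a \<Rightarrow> real) \<Rightarrow> 'a rel \<Rightarrow> bool" where
  "congruence A X f \<theta> \<longleftrightarrow> equiv A \<theta> \<and>
     (\<forall>a a'. (a, a') \<in> \<theta> \<longrightarrow> (\<forall>x\<in>X. \<forall>b\<in>A.
        Max (f a x ` (\<theta> `` {b})) = Max (f a' x ` (\<theta> `` {b}))))"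

definition quot_states :: "'a set \<Rightarrow> 'a rel \<Rightarrow> 'a set set" where
  "quot_states A \<theta> = A // \<theta>"

definition quot_trans :: "('a \<Rightarrow> 'x \<Rightarrow> 'a \<Rightarrow> real) \<Rightarrow> 'a set \<Rightarrow> 'x \<Rightarrow> 'a set \<Rightarrow> real" where
  "quot_trans f P x Q = Max {f a' x b' | a' b'. a' \<in> P \<and> b' \<in> Q}"

end

theory Submission
  imports Defs
begin

text \<open>Only the supports of the degree functions matter. A word leads from the class of a
to a class Q of the quotient with positive degree iff it leads from a to some state of Q
with positive degree: the congruence condition makes positivity of the maximal degree into
a class independent of the representative of the source class. Hence the reachable set of
the quotient automaton is the image of the reachable set under the class map, and the
three directing conditions pass to images.\<close>

lemma equiv_class_eq_quotient_iff:
  assumes "equiv A \<theta>" "Q \<in> A // \<theta>" "a \<in> A"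
  shows "\<theta> `` {a} = Q \<longleftrightarrow> a \<in> Q"
proof
  show "\<theta> `` {a} = Q \<Longrightarrow> a \<in> Q"
    using equiv_class_self[OF assms(1,3)] by simp
  have "(a, a) \<in> \<theta>"
    using equiv_class_self[OF assms(1,3)] by simp
  then show "a \<in> Q \<Longrightarrow> \<theta> `` {a} = Q"
    using quotient_eqI[OF assms(1) quotientI[OF assms(3)] assms(2) equiv_class_self[OF assms(1,3)]] by blast
qed

lemma classes_meeting_eq_image:
  assumes "equiv A \<theta>" "S \<subseteq> A"
  shows "{Q \<in> A // \<theta>. \<exists>b\<in>Q. b \<in> S} = (\<lambda>b. \<theta> `` {b}) ` S"
proof (intro equalityI subsetI)
  fix Q assume "Q \<in> {Q \<in> A // \<theta>. \<exists>b\<in>Q. b \<in> S}"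
  then obtain b where "Q \<in> A // \<theta>" "b \<in> Q" "b \<in> S" by blast
  moreover from this have "\<theta> `` {b} = Q"
    using equiv_class_eq_quotient_iff[OF assms(1)] assms(2) by (meson subsetD)
  ultimately show "Q \<in> (\<lambda>b. \<theta> `` {b}) ` S"
    by (metis image_eqI)
next
  fix Q assume "Q \<in> (\<lambda>b. \<theta> `` {b}) ` S"
  then obtain b where "b \<in> S" and Q: "Q = \<theta> `` {b}" by blast
  with assms(2) have "b \<in> A" by blast
  then show "Q \<in> {Q \<in> A // \<theta>. \<exists>b\<in>Q. b \<in> S}"
    unfolding Q using quotientI[of b A \<theta>] equiv_class_self[OF assms(1)] \<open>b \<in> S\<close> by blast
qed

lemma fstar_rev_Cons_pos_iff:
  assumes "finite A" and "A \<noteq> {}"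
  shows "0 < fstar_rev A f a (x # rw) b \<longleftrightarrow> (\<exists>c\<in>A. 0 < fstar_rev A f a rw c \<and> 0 < f c x b)"
  using assms by (simp add: Max_gr_iff)

lemma quot_trans_pos_iff:
  assumes "finite P" "P \<noteq> {}" "finite Q" "Q \<noteq> {}"
  shows "0 < quot_trans f P x Q \<longleftrightarrow> (\<exists>a\<in>P. \<exists>b\<in>Q. 0 < f a x b)"
proof -
  have "finite {f a x b | a b. a \<in> P \<and> b \<in> Q}"
    using assms by (simp add: finite_image_set2)
  moreover have "{f a x b | a b. a \<in> P \<and> b \<in> Q} \<noteq> {}"
    using assms by blast
  ultimately show ?thesis
    unfolding quot_trans_def by (auto simp: Max_gr_iff)
qed

lemma congruence_pos_into_class_iff:
  assumes "congruence A X f \<theta>" "finite A" "(a, c) \<in> \<theta>" "x \<in> X" "Q \<in> A // \<theta>"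
  shows "(\<exists>b\<in>Q. 0 < f a x b) \<longleftrightarrow> (\<exists>b\<in>Q. 0 < f c x b)"
proof -
  have eqv: "equiv A \<theta>"
    using assms(1) by (simp add: congruence_def)
  obtain b where "b \<in> A" and Q: "Q = \<theta> `` {b}"
    using assms(5) by (auto elim: quotientE)
  have "finite Q" "Q \<noteq> {}"
    using in_quotient_imp_subset[OF eqv assms(5)] in_quotient_imp_non_empty[OF eqv assms(5)]
      assms(2) finite_subset by auto
  then have pos_iff_Max: "(\<exists>b\<in>Q. 0 < g b) \<longleftrightarrow> 0 < Max (g ` Q)" for g :: "'a \<Rightarrow> real"
    by (simp add: Max_gr_iff)
  have "Max (f a x ` Q) = Max (f c x ` Q)"
    using assms(1,3,4) \<open>b \<in> A\<close> unfolding Q congruence_def by blast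
  then show ?thesis
    by (simp only: pos_iff_Max)
qed

lemma bex_quotient_conj_iff:
  assumes "equiv A \<theta>" and invariant: "\<And>a c. (a, c) \<in> \<theta> \<Longrightarrow> \<phi> a \<Longrightarrow> \<phi> c"
  shows "(\<exists>P\<in>A // \<theta>. (\<exists>c\<in>P. \<psi> c) \<and> (\<exists>a\<in>P. \<phi> a)) \<longleftrightarrow> (\<exists>c\<in>A. \<psi> c \<and> \<phi> c)"
proof
  assume "\<exists>P\<in>A // \<theta>. (\<exists>c\<in>P. \<psi> c) \<and> (\<exists>a\<in>P. \<phi> a)"
  then obtain P c a where "P \<in> A // \<theta>" "c \<in> P" "\<psi> c" "a \<in> P" "\<phi> a"
    by blast
  moreover from this have "(a, c) \<in> \<theta>"
    using in_quotient_imp_in_rel[OF assms(1)] by blast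
  ultimately show "\<exists>c\<in>A. \<psi> c \<and> \<phi> c"
    using in_quotient_imp_subset[OF assms(1)] invariant by blast
next
  assume "\<exists>c\<in>A. \<psi> c \<and> \<phi> c"
  then obtain c where "c \<in> A" "\<psi> c" "\<phi> c"
    by blast
  then show "\<exists>P\<in>A // \<theta>. (\<exists>c\<in>P. \<psi> c) \<and> (\<exists>a\<in>P. \<phi> a)"
    using quotientI equiv_class_self[OF assms(1)] by metis
qed

lemma fstar_rev_quot_pos_iff:
  assumes cong: "congruence A X f \<theta>" and "finite A"
    and "rw \<in> lists X" "a \<in> A" "Q \<in> A // \<theta>"
  shows "0 < fstar_rev (A // \<theta>) (quot_trans f) (\<theta> `` {a}) rw Q \<longleftrightarrow> (\<exists>b\<in>Q. 0 < fstar_rev A f a rw b)"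
  using assms(3,5)
proof (induction rw arbitrary: Q rule: lists.induct)
  case Nil
  have "equiv A \<theta>"
    using cong by (simp add: congruence_def)
  then show ?case
    using equiv_class_eq_quotient_iff[OF _ Nil.prems \<open>a \<in> A\<close>] by auto
next
  case (Cons x rw)
  have eqv: "equiv A \<theta>"
    using cong by (simp add: congruence_def)
  have classes_finite: "finite P" "P \<noteq> {}" if "P \<in> A // \<theta>" for P
    using in_quotient_imp_subset[OF eqv that] in_quotient_imp_non_empty[OF eqv that]
      \<open>finite A\<close> finite_subset by auto
  have "A \<noteq> {}"
    using \<open>a \<in> A\<close> by blast
  have "finite (A // \<theta>)"
    using finite_quotient[OF \<open>finite A\<close> equiv_type[OF eqv]] .
  moreover have "A // \<theta> \<noteq> {}"
    using \<open>A \<noteq> {}\<close> by simp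
  ultimately have "0 < fstar_rev (A // \<theta>) (quot_trans f) (\<theta> `` {a}) (x # rw) Q \<longleftrightarrow>
      (\<exists>P\<in>A // \<theta>. 0 < fstar_rev (A // \<theta>) (quot_trans f) (\<theta> `` {a}) rw P \<and> 0 < quot_trans f P x Q)"
    by (rule fstar_rev_Cons_pos_iff)
  also have "\<dots> \<longleftrightarrow> (\<exists>P\<in>A // \<theta>. (\<exists>c\<in>P. 0 < fstar_rev A f a rw c) \<and> (\<exists>a'\<in>P. \<exists>b\<in>Q. 0 < f a' x b))"
  proof (rule bex_cong[OF refl])
    fix P assume "P \<in> A // \<theta>"
    show "0 < fstar_rev (A // \<theta>) (quot_trans f) (\<theta> `` {a}) rw P \<and> 0 < quot_trans f P x Q \<longleftrightarrow>
        (\<exists>c\<in>P. 0 < fstar_rev A f a rw c) \<and> (\<exists>a'\<in>P. \<exists>b\<in>Q. 0 < f a' x b)"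
      by (simp only: Cons.IH[OF \<open>P \<in> A // \<theta>\<close>]
          quot_trans_pos_iff[OF classes_finite[OF \<open>P \<in> A // \<theta>\<close>] classes_finite[OF Cons.prems]])
  qed
  also have "\<dots> \<longleftrightarrow> (\<exists>c\<in>A. 0 < fstar_rev A f a rw c \<and> (\<exists>b\<in>Q. 0 < f c x b))"
    using congruence_pos_into_class_iff[OF cong \<open>finite A\<close> _ Cons.hyps(1) Cons.prems]
    by (intro bex_quotient_conj_iff[OF eqv]) auto
  also have "\<dots> \<longleftrightarrow> (\<exists>b\<in>Q. 0 < fstar_rev A f a (x # rw) b)"
    by (simp only: fstar_rev_Cons_pos_iff[OF \<open>finite A\<close> \<open>A \<noteq> {}\<close>]) blast
  finally show ?case .
qed

lemma reach_quot:
  assumes "congruence A X f \<theta>" "finite A" "w \<in> lists X" "a \<in> A"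
  shows "reach (quot_states A \<theta>) (quot_trans f) (\<theta> `` {a}) w = (\<lambda>b. \<theta> `` {b}) ` reach A f a w"
proof -
  have eqv: "equiv A \<theta>"
    using assms(1) by (simp add: congruence_def)
  have "rev w \<in> lists X"
    using assms(3) by (simp add: in_lists_conv_set)
  then have "reach (quot_states A \<theta>) (quot_trans f) (\<theta> `` {a}) w
      = {Q \<in> A // \<theta>. \<exists>b\<in>Q. b \<in> reach A f a w}"
    using fstar_rev_quot_pos_iff[OF assms(1,2) _ assms(4)] in_quotient_imp_subset[OF eqv]
    unfolding reach_def quot_states_def fstar_def by blast
  also have "\<dots> = (\<lambda>b. \<theta> `` {b}) ` reach A f a w"
    by (rule classes_meeting_eq_image[OF eqv]) (auto simp: reach_def)
  finally show ?thesis .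
qed

lemma quot_states_cases:
  assumes "P \<in> quot_states A \<theta>"
  obtains a where "a \<in> A" "P = \<theta> `` {a}"
  using assms unfolding quot_states_def by (auto elim: quotientE)

lemma D1_subset_quot:
  assumes "congruence A X f \<theta>" "finite A"
  shows "D1 A X f \<subseteq> D1 (quot_states A \<theta>) X (quot_trans f)"
proof
  fix w assume "w \<in> D1 A X f"
  then obtain c where w: "w \<in> lists X" "c \<in> A" "\<And>a. a \<in> A \<Longrightarrow> reach A f a w = {c}"
    unfolding D1_def by blast
  have "reach (quot_states A \<theta>) (quot_trans f) P w = {\<theta> `` {c}}"
    if "P \<in> quot_states A \<theta>" for P
    using that by (cases rule: quot_states_cases) (simp add: reach_quot[OF assms w(1)] w(3))
  moreover have "\<theta> `` {c} \<in> quot_states A \<theta>"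
    using w(2) by (simp add: quot_states_def quotientI)
  ultimately show "w \<in> D1 (quot_states A \<theta>) X (quot_trans f)"
    using w(1) unfolding D1_def by (intro CollectI conjI bexI[of _ "\<theta> `` {c}"] ballI) auto
qed

lemma D2_subset_quot:
  assumes "congruence A X f \<theta>" "finite A"
  shows "D2 A X f \<subseteq> D2 (quot_states A \<theta>) X (quot_trans f)"
proof
  fix w assume "w \<in> D2 A X f"
  then have w: "w \<in> lists X" "\<And>a b. a \<in> A \<Longrightarrow> b \<in> A \<Longrightarrow> reach A f a w = reach A f b w"
    unfolding D2_def by blast+
  have "reach (quot_states A \<theta>) (quot_trans f) P w = reach (quot_states A \<theta>) (quot_trans f) P' w"
    if P: "P \<in> quot_states A \<theta>" and P': "P' \<in> quot_states A \<theta>" for P P'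
  proof -
    obtain a where "a \<in> A" "P = \<theta> `` {a}"
      using P by (rule quot_states_cases)
    moreover obtain b where "b \<in> A" "P' = \<theta> `` {b}"
      using P' by (rule quot_states_cases)
    ultimately show ?thesis
      by (simp only: reach_quot[OF assms w(1)] w(2)[of a b])
  qed
  then show "w \<in> D2 (quot_states A \<theta>) X (quot_trans f)"
    using w(1) unfolding D2_def by blast
qed

lemma D3_subset_quot:
  assumes "congruence A X f \<theta>" "finite A"
  shows "D3 A X f \<subseteq> D3 (quot_states A \<theta>) X (quot_trans f)"
proof
  fix w assume "w \<in> D3 A X f"
  then obtain c where w: "w \<in> lists X" "c \<in> A" "\<And>a. a \<in> A \<Longrightarrow> c \<in> reach A f a w"
    unfolding D3_def by blast
  have "\<theta> `` {c} \<in> reach (quot_states A \<theta>) (quot_trans f) P w"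
    if "P \<in> quot_states A \<theta>" for P
    using that by (cases rule: quot_states_cases) (simp add: reach_quot[OF assms w(1)] w(3))
  moreover have "\<theta> `` {c} \<in> quot_states A \<theta>"
    using w(2) by (simp add: quot_states_def quotientI)
  ultimately show "w \<in> D3 (quot_states A \<theta>) X (quot_trans f)"
    using w(1) unfolding D3_def by (intro CollectI conjI bexI[of _ "\<theta> `` {c}"] ballI) auto
qed

theorem corollary6p5:
  fixes A :: "'a set" and X :: "'x set" and f :: "'a \<Rightarrow> 'x \<Rightarrow> 'a \<Rightarrow> real"
    and \<theta> :: "'a rel"
  assumes "fuzzy_automaton A X f"
    and "congruence A X f \<theta>"
  shows "\<forall>i\<in>{1, 2, 3::nat}.
           Dset i A X f \<subseteq> Dset i (quot_states A \<theta>) X (quot_trans f)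
         \<and> (directable i A X f \<longrightarrow> directable i (quot_states A \<theta>) X (quot_trans f))"
proof -
  have "finite A"
    using assms(1) by (simp add: fuzzy_automaton_def)
  note subsets = D1_subset_quot D2_subset_quot D3_subset_quot
  show ?thesis
    using subsets[OF assms(2) \<open>finite A\<close>] unfolding directable_def Dset_def by auto
qed

end
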